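(* For the sequence $\{\bm g^t=(\bm\beta^t,\bm z^t,\bm u^t)\}$ generated by the parallel PPA or the improved parallel PPA, $$\|\bm g^{t+1}-\bm g^*\|_{\bm H_*}^2\le\|\bm g^t-\bm g^*\|_{\bm H_*}^2-\|\bm g^{t+1}-\bm g^t\|_{\bm H_*}^2,\quad\forall\,\bm g^*\in\Omega^*,$$ where $\bm H_*=\bm H$ for the parallel PPA and $\bm H_*=\bm H_K$ for the improved parallel PPA.
   Context: Dantzig selector in split form: with $\bm X=(\bm X_1,\dots,\bm X_K)\in\mathbb R^{n\times p}$, $\bm y\in\mathbb R^n$, $\bm A=\bm X^\top\bm X=(\bm A_1,\dots,\bm A_K)$, $\bm A_i=\bm X^\top\bm X_i\in\mathbb R^{p\times p_i}$, $\bm\beta=(\bm\beta_{1\cdot}^\top,\dots,\bm\beta_{K\cdot}^\top)^\top$, solve $\min_{\bm\beta,\bm z}\sum_i\|\bm\beta_{i\cdot}\|_1+\delta(\bm z)$ s.t. $\sum_i\bm A_i\bm\beta_{i\cdot}-\bm z=\bm X^\top\bm y$, where $\delta$ is the indicator of $\{\bm z:\|\bm z\|_\infty\le n\lambda\}$. Lagrangian $L(\bm\beta,\bm z;\bm u)=\sum_i\|\bm\beta_{i\cdot}\|_1+\delta(\bm z)-\bm u^\top(\sum_i\bm A_i\bm\beta_{i\cdot}-\bm z-\bm X^\top\bm y)$; $\Omega^*$ is its (assumed non-empty) set of saddle points. Parallel PPA with $\mu>0$ and $\eta$ larger than the largest eigenvalue of $\mu\bm A^\top\bm A$: $\bm\beta_{i\cdot}^{t+1}=\mathrm{sign}(\bm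 v_i)\odot\max\{|\bm v_i|-1/\eta,0\}$ with $\bm v_i=\bm\beta_{i\cdot}^t+\bm A_i^\top\bm u^t/\eta$; $\bm z^{t+1}=\min\{\max\{\bm z^t-\bm u^t/\mu,-n\lambda\},n\lambda\}$; $\bm u^{t+1}=\bm u^t-\frac{\mu}{2}[2(\bm A\bm\beta^{t+1}-\bm z^{t+1}-\bm X^\top\bm y)-(\bm A\bm\beta^t-\bm z^t-\bm X^\top\bm y)]$. Improved parallel PPA: same but $\eta$ replaced by $\eta_i$ (larger than the largest eigenvalue of $\mu\bm A_i^\top\bm A_i$) in block $i$, and $\frac{\mu}{2}$ replaced by $\frac{\mu}{K+1}$ in the $\bm u$ update. $\|\bm v\|_{\bm H}=\sqrt{\bm v^\top\bm H\bm v}$, with $\bm H=\begin{pmatrix}\eta\bm I_p&\bm 0&\bm A^\top\\\bm 0&\mu\bm I_p&-\bm I_p\\\bm A&-\bm I_p&\frac{2}{\mu}\bm I_p\end{pmatrix}$ and $\bm H_K=\begin{pmatrix}\mathrm{diag}(\eta_1\bm I_{p_1},\dots,\eta_K\bm I_{p_K},\mu\bm I_p)&\bm G^\top\\\bm G&\frac{K+1}{\mu}\bm I_p\end{pmatrix}$, $\bm G=(\bm A_1,\dots,\bm A_K,-\bm I_p)$; both positive definite. *)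

theory Defs
  imports "HOL-Analysis.Analysis"
begin

text \<open>Data: X is an n x p matrix (rows indexed by 'n, columns by 'p), y in R^n.
  A = X^T X.  The columns are split into K blocks by blk :: 'p => nat.\<close>

definition gram :: "real^'p^'n \<Rightarrow> real^'p^'p" where
  "gram X = transpose X ** X"

definition in_box :: "nat \<Rightarrow> real \<Rightarrow> real^'p \<Rightarrow> bool" where
  "in_box n lam z \<longleftrightarrow> (\<forall>j. \<bar>z$j\<bar> \<le> real n * lam)"

definition box_ind :: "nat \<Rightarrow> real \<Rightarrow> real^'p \<Rightarrow> ereal" where
  "box_ind n lam z = (if in_box n lam z then 0 else \<infinity>)"

definition lagr :: "real^'p^'n \<Rightarrow> real^'n \<Rightarrow> real \<Rightarrow> real^'p \<Rightarrow> real^'p \<Rightarrow> real^'p \<Rightarrow> ereal" where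
  "lagr X y lam \<beta> z u =
     ereal ((\<Sum>j\<in>UNIV. \<bar>\<beta>$j\<bar>) - u \<bullet> (gram X *v \<beta> - z - transpose X *v y))
     + box_ind CARD('n) lam z"

definition saddle_set :: "real^'p^'n \<Rightarrow> real^'n \<Rightarrow> real \<Rightarrow> ((real^'p) \<times> (real^'p) \<times> (real^'p)) set" where
  "saddle_set X y lam = {(\<beta>s, zs, us). \<forall>\<beta> z u.
      lagr X y lam \<beta>s zs u \<le> lagr X y lam \<beta>s zs us \<and>
      lagr X y lam \<beta>s zs us \<le> lagr X y lam \<beta> z us}"

text \<open>c is an eigenvalue of the principal submatrix M[I,I] (for I = UNIV: of M itself).\<close>
definition eigenvalue_on :: "'p set \<Rightarrow> real^'p^'p \<Rightarrow> real \<Rightarrow> bool" where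
  "eigenvalue_on I M c \<longleftrightarrow> (\<exists>v::real^'p. v \<noteq> 0 \<and> (\<forall>j. j \<notin> I \<longrightarrow> v$j = 0) \<and>
      (\<forall>j\<in>I. (\<Sum>k\<in>I. M$j$k * v$k) = c * v$j))"

text \<open>One generic iteration scheme: per-coordinate proximal parameter eta j,
  and dual step coefficient cu (mu/2 for parallel PPA, mu/(K+1) for improved).\<close>
definition ppa_seq :: "real^'p^'n \<Rightarrow> real^'n \<Rightarrow> real \<Rightarrow> real \<Rightarrow> ('p \<Rightarrow> real) \<Rightarrow> real
     \<Rightarrow> (nat \<Rightarrow> real^'p) \<Rightarrow> (nat \<Rightarrow> real^'p) \<Rightarrow> (nat \<Rightarrow> real^'p) \<Rightarrow> bool" where
  "ppa_seq X y lam \<mu> eta cu \<beta> z u \<longleftrightarrow> (\<forall>t.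
     (\<forall>j. let v = \<beta> t $ j + (transpose (gram X) *v u t) $ j / eta j in
          \<beta> (Suc t) $ j = sgn v * max (\<bar>v\<bar> - 1 / eta j) 0) \<and>
     (\<forall>j. z (Suc t) $ j = min (max (z t $ j - u t $ j / \<mu>) (- (real CARD('n) * lam)))
                             (real CARD('n) * lam)) \<and>
     u (Suc t) = u t - cu *\<^sub>R
        (2 *\<^sub>R (gram X *v \<beta> (Suc t) - z (Suc t) - transpose X *v y)
           - (gram X *v \<beta> t - z t - transpose X *v y)))"

text \<open>Squared H-norm ||(beta,z,u)||_H^2 = v^T H v for
  H = [[diag(eta), 0, A^T], [0, mu I, -I], [A, -I, d I]]  (so G = (A, -I)).
  H: eta constant, d = 2/mu.  H_K: eta blockwise eta_i, d = (K+1)/mu.\<close>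
definition Hnorm_sq :: "real^'p^'n \<Rightarrow> ('p \<Rightarrow> real) \<Rightarrow> real \<Rightarrow> real
     \<Rightarrow> (real^'p) \<times> (real^'p) \<times> (real^'p) \<Rightarrow> real" where
  "Hnorm_sq X eta \<mu> d g = (case g of (\<beta>, z, u) \<Rightarrow>
      (\<Sum>j\<in>UNIV. eta j * (\<beta>$j)\<^sup>2) + \<mu> * (z \<bullet> z)
      + 2 * (u \<bullet> (gram X *v \<beta> - z)) + d * (u \<bullet> u))"

end

theory Submission
  imports Defs
begin

text \<open>
  Put \<open>a = g\<^bsup>t+1\<^esup> - g\<^sup>*\<close> and \<open>e = g\<^bsup>t\<^esup> - g\<^bsup>t+1\<^esup>\<close>. Then
  \<open>g\<^bsup>t\<^esup> - g\<^sup>* = a + e\<close> and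
  \<open>\<parallel>a + e\<parallel>\<^sub>H\<^sup>2 = \<parallel>a\<parallel>\<^sub>H\<^sup>2 + \<parallel>e\<parallel>\<^sub>H\<^sup>2 + 2\<langle>a, e\<rangle>\<^sub>H\<close>, so it suffices to show \<open>\<langle>a, e\<rangle>\<^sub>H \<ge> 0\<close>.
  The \<open>\<beta>\<close>-update is soft thresholding, i.e. the proximal map of the \<open>l\<^sub>1\<close> norm, and the
  \<open>z\<close>-update is the projection onto the box; comparing their optimality conditions with
  those of the saddle point (monotonicity of the subdifferential of \<open>|\<cdot>|\<close> and of the
  normal cone of the box) gives two nonnegative terms. The \<open>u\<close>-update, whose step
  size is the reciprocal of the \<open>(u, u)\<close>-entry of \<open>H\<close>, makes the remaining multiplier
  terms of \<open>\<langle>a, e\<rangle>\<^sub>H\<close> cancel exactly.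
\<close>

lemma inner_transpose_mult: "(transpose A *v w) \<bullet> v = w \<bullet> (A *v v)"
  for A :: "real^'m^'n"
  by (metis dot_lmul_matrix vector_transpose_matrix transpose_transpose)

definition H_inner :: "real^'p^'n \<Rightarrow> ('p \<Rightarrow> real) \<Rightarrow> real \<Rightarrow> real
     \<Rightarrow> (real^'p) \<times> (real^'p) \<times> (real^'p) \<Rightarrow> (real^'p) \<times> (real^'p) \<times> (real^'p) \<Rightarrow> real" where
  "H_inner X eta \<mu> d g g' = (case g of (\<beta>, z, u) \<Rightarrow> case g' of (\<beta>', z', u') \<Rightarrow>
      (\<Sum>j\<in>UNIV. eta j * \<beta>$j * \<beta>'$j) + \<mu> * (z \<bullet> z')
      + u \<bullet> (gram X *v \<beta>' - z') + u' \<bullet> (gram X *v \<beta> - z) + d * (u \<bullet> u'))"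

lemma Hnorm_sq_add:
  "Hnorm_sq X eta \<mu> d (g + g')
    = Hnorm_sq X eta \<mu> d g + Hnorm_sq X eta \<mu> d g' + 2 * H_inner X eta \<mu> d g g'"
proof -
  obtain b z u b' z' u' where g: "g = (b, z, u)" and g': "g' = (b', z', u')"
    by (cases g, cases g') auto
  have "(\<Sum>j\<in>UNIV. eta j * ((b + b')$j)\<^sup>2) = (\<Sum>j\<in>UNIV. eta j * (b$j)\<^sup>2)
      + (\<Sum>j\<in>UNIV. eta j * (b'$j)\<^sup>2) + 2 * (\<Sum>j\<in>UNIV. eta j * b$j * b'$j)"
    by (simp add: sum.distrib sum_distrib_left power2_sum algebra_simps)
  then show ?thesis
    unfolding g g' Hnorm_sq_def H_inner_def
    by (simp add: matrix_vector_right_distrib inner_add_left inner_add_right inner_diff_left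
        inner_diff_right inner_commute algebra_simps)
qed

lemma Hnorm_sq_uminus: "Hnorm_sq X eta \<mu> d (- g) = Hnorm_sq X eta \<mu> d g"
  by (cases g) (simp add: Hnorm_sq_def vec.neg inner_diff_right)

lemma Hnorm_sq_three_point:
  assumes "0 \<le> H_inner X eta \<mu> d (g1 - gs) (g0 - g1)"
  shows "Hnorm_sq X eta \<mu> d (g1 - gs)
    \<le> Hnorm_sq X eta \<mu> d (g0 - gs) - Hnorm_sq X eta \<mu> d (g1 - g0)"
proof -
  have "Hnorm_sq X eta \<mu> d (g0 - gs) = Hnorm_sq X eta \<mu> d ((g1 - gs) + (g0 - g1))"
    by (simp add: algebra_simps)
  also have "\<dots> = Hnorm_sq X eta \<mu> d (g1 - gs) + Hnorm_sq X eta \<mu> d (g1 - g0)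
      + 2 * H_inner X eta \<mu> d (g1 - gs) (g0 - g1)"
    unfolding Hnorm_sq_add using Hnorm_sq_uminus[of X eta \<mu> d "g1 - g0"] by simp
  finally show ?thesis using assms by linarith
qed

lemma soft_threshold_subgradient:
  fixes e v x :: real
  assumes "e > 0"
  defines "b \<equiv> sgn v * max (\<bar>v\<bar> - 1 / e) 0"
  shows "\<bar>b\<bar> + e * (v - b) * (x - b) \<le> \<bar>x\<bar>"
proof (cases "\<bar>v\<bar> \<le> 1 / e")
  case True
  then have "\<bar>e * v\<bar> \<le> 1"
    using assms(1) by (simp add: abs_mult field_simps)
  then have "e * v * x \<le> \<bar>x\<bar>"
    by (metis abs_ge_self abs_ge_zero abs_mult mult_left_le_one_le order_trans)
  moreover have "b = 0"
    using True by (simp add: b_def)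
  ultimately show ?thesis by simp
next
  case False
  then have "e * (v - b) = sgn v" and "\<bar>b\<bar> = sgn v * b"
    using assms(1) by (auto simp: b_def sgn_if field_simps)
  moreover have "sgn v * x \<le> \<bar>x\<bar>"
    by (auto simp: sgn_if)
  ultimately show ?thesis
    by (simp add: algebra_simps)
qed

lemma clip_variational_inequality:
  fixes R w x :: real
  assumes "\<bar>x\<bar> \<le> R"
  shows "(w - min (max w (- R)) R) * (x - min (max w (- R)) R) \<le> 0"
  using assms by (auto simp: abs_le_iff min_def max_def mult_le_0_iff)

lemma abs_clip_le:
  fixes R w :: real
  assumes "0 \<le> R"
  shows "\<bar>min (max w (- R)) R\<bar> \<le> R"
  using assms by (auto simp: abs_le_iff min_def max_def)

lemma lagr_in_box:
  fixes X :: "real^'p::finite^'n::finite"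
  assumes "in_box CARD('n) lam z"
  shows "lagr X y lam \<beta> z u
    = ereal ((\<Sum>j\<in>UNIV. \<bar>\<beta>$j\<bar>) - u \<bullet> (gram X *v \<beta> - z - transpose X *v y))"
  using assms by (simp add: lagr_def box_ind_def)

lemma saddle_set_in_box:
  fixes X :: "real^'p::finite^'n::finite"
  assumes "(\<beta>s, zs, us) \<in> saddle_set X y lam" and "0 \<le> lam"
  shows "in_box CARD('n) lam zs"
proof (rule ccontr)
  assume "\<not> in_box CARD('n) lam zs"
  then have "lagr X y lam \<beta>s zs us = \<infinity>"
    by (simp add: lagr_def box_ind_def)
  moreover have "lagr X y lam \<beta>s 0 us \<noteq> \<infinity>"
    using assms(2) by (simp add: lagr_def box_ind_def in_box_def)
  moreover have "lagr X y lam \<beta>s zs us \<le> lagr X y lam \<beta>s 0 us"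
    using assms(1) unfolding saddle_set_def by blast
  ultimately show False
    by simp
qed

lemma saddle_set_feasible:
  fixes X :: "real^'p::finite^'n::finite"
  assumes "(\<beta>s, zs, us) \<in> saddle_set X y lam" and "0 \<le> lam"
  shows "gram X *v \<beta>s - zs - transpose X *v y = 0"
proof -
  let ?r = "gram X *v \<beta>s - zs - transpose X *v y"
  have "lagr X y lam \<beta>s zs (us - ?r) \<le> lagr X y lam \<beta>s zs us"
    using assms(1) unfolding saddle_set_def by blast
  then have "?r \<bullet> ?r \<le> 0"
    using lagr_in_box[OF saddle_set_in_box[OF assms]] by (simp add: inner_diff_left)
  then show ?thesis
    using inner_eq_zero_iff inner_ge_zero order_antisym by metis
qed

lemma saddle_set_l1_subgradient:
  fixes X :: "real^'p::finite^'n::finite"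
  assumes "(\<beta>s, zs, us) \<in> saddle_set X y lam" and "0 \<le> lam"
  shows "\<bar>\<beta>s$j\<bar> + (transpose (gram X) *v us)$j * (x - \<beta>s$j) \<le> \<bar>x\<bar>"
proof -
  define \<beta> where "\<beta> = \<beta>s + axis j (x - \<beta>s$j)"
  have "lagr X y lam \<beta>s zs us \<le> lagr X y lam \<beta> zs us"
    using assms(1) unfolding saddle_set_def by blast
  then have "(\<Sum>k\<in>UNIV. \<bar>\<beta>s$k\<bar>) - us \<bullet> (gram X *v \<beta>s)
      \<le> (\<Sum>k\<in>UNIV. \<bar>\<beta>$k\<bar>) - us \<bullet> (gram X *v \<beta>)"
    using lagr_in_box[OF saddle_set_in_box[OF assms]] by (simp add: inner_diff_right)
  moreover have "(\<Sum>k\<in>UNIV. \<bar>\<beta>$k\<bar>) = (\<Sum>k\<in>UNIV. \<bar>\<beta>s$k\<bar>) + (\<bar>x\<bar> - \<bar>\<beta>s$j\<bar>)"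
  proof -
    have "(\<Sum>k\<in>UNIV. \<bar>\<beta>$k\<bar>)
        = (\<Sum>k\<in>UNIV. \<bar>\<beta>s$k\<bar> + (if k = j then \<bar>x\<bar> - \<bar>\<beta>s$j\<bar> else 0))"
      by (rule sum.cong) (auto simp: \<beta>_def axis_def)
    then show ?thesis
      by (simp add: sum.distrib)
  qed
  moreover have "us \<bullet> (gram X *v \<beta>)
      = us \<bullet> (gram X *v \<beta>s) + (transpose (gram X) *v us)$j * (x - \<beta>s$j)"
    by (simp add: \<beta>_def matrix_vector_right_distrib inner_add_right inner_axis
        inner_transpose_mult[symmetric])
  ultimately show ?thesis
    by linarith
qed

lemma saddle_set_box_minimal:
  fixes X :: "real^'p::finite^'n::finite"
  assumes "(\<beta>s, zs, us) \<in> saddle_set X y lam" and "0 \<le> lam" and "in_box CARD('n) lam z"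
  shows "us \<bullet> zs \<le> us \<bullet> z"
proof -
  have "lagr X y lam \<beta>s zs us \<le> lagr X y lam \<beta>s z us"
    using assms(1) unfolding saddle_set_def by blast
  then show ?thesis
    using lagr_in_box[OF saddle_set_in_box[OF assms(1,2)]] lagr_in_box[OF assms(3)]
    by (simp add: inner_diff_right)
qed

lemma l1_prox_step_monotone:
  fixes eta :: "'p::finite \<Rightarrow> real" and b0 b1 \<beta>s g h :: "real^'p"
  assumes eta_pos: "\<forall>j. eta j > 0"
    and prox: "\<forall>j. let v = b0$j + g$j / eta j in b1$j = sgn v * max (\<bar>v\<bar> - 1 / eta j) 0"
    and subgradient: "\<forall>j x. \<bar>\<beta>s$j\<bar> + h$j * (x - \<beta>s$j) \<le> \<bar>x\<bar>"
  shows "0 \<le> (\<Sum>j\<in>UNIV. eta j * (b1 - \<beta>s)$j * (b0 - b1)$j) + (g - h) \<bullet> (b1 - \<beta>s)"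
proof -
  have "0 \<le> (eta j * (b0 - b1)$j + g$j - h$j) * (b1 - \<beta>s)$j" for j
  proof -
    define v where "v = b0$j + g$j / eta j"
    have "eta j * (v - b1$j) = eta j * (b0 - b1)$j + g$j"
      using eta_pos[rule_format, of j] by (simp add: v_def field_simps)
    then have "\<bar>b1$j\<bar> + (eta j * (b0 - b1)$j + g$j) * (\<beta>s$j - b1$j) \<le> \<bar>\<beta>s$j\<bar>"
      using soft_threshold_subgradient[of "eta j" v "\<beta>s$j"] eta_pos prox
      by (simp add: v_def Let_def)
    moreover have "\<bar>\<beta>s$j\<bar> + h$j * (b1$j - \<beta>s$j) \<le> \<bar>b1$j\<bar>"
      using subgradient by blast
    ultimately show ?thesis
      by (simp add: algebra_simps)
  qed
  then have "0 \<le> (\<Sum>j\<in>UNIV. (eta j * (b0 - b1)$j + g$j - h$j) * (b1 - \<beta>s)$j)"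
    by (simp add: sum_nonneg)
  also have "\<dots> = (\<Sum>j\<in>UNIV. eta j * (b1 - \<beta>s)$j * (b0 - b1)$j) + (g - h) \<bullet> (b1 - \<beta>s)"
    by (simp add: inner_vec_def sum.distrib[symmetric] algebra_simps)
  finally show ?thesis .
qed

lemma box_projection_step_monotone:
  fixes \<mu> R :: real and z0 z1 zs u0 :: "real^'p::finite"
  assumes mu_pos: "\<mu> > 0"
    and proj: "\<forall>j. z1$j = min (max (z0$j - u0$j / \<mu>) (- R)) R"
    and zs_box: "\<forall>j. \<bar>zs$j\<bar> \<le> R"
  shows "0 \<le> \<mu> * ((z1 - zs) \<bullet> (z0 - z1)) - u0 \<bullet> (z1 - zs)"
proof -
  have "0 \<le> (\<mu> * (z0 - z1)$j - u0$j) * (z1 - zs)$j" for j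
  proof -
    have "(z0$j - u0$j / \<mu> - z1$j) * (zs$j - z1$j) \<le> 0"
      using clip_variational_inequality[OF zs_box[rule_format, of j]] proj by simp
    moreover have "(\<mu> * (z0 - z1)$j - u0$j) * (z1 - zs)$j
        = \<mu> * - ((z0$j - u0$j / \<mu> - z1$j) * (zs$j - z1$j))"
      using mu_pos by (simp add: field_simps)
    ultimately show ?thesis
      using mu_pos by (simp add: mult_nonneg_nonpos)
  qed
  then have "0 \<le> (\<Sum>j\<in>UNIV. (\<mu> * (z0 - z1)$j - u0$j) * (z1 - zs)$j)"
    by (simp add: sum_nonneg)
  also have "\<dots> = (\<mu> *\<^sub>R (z0 - z1) - u0) \<bullet> (z1 - zs)"
    by (simp add: inner_vec_def)
  also have "\<dots> = \<mu> * ((z1 - zs) \<bullet> (z0 - z1)) - u0 \<bullet> (z1 - zs)"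
    by (simp add: inner_diff_left inner_diff_right inner_commute)
  finally show ?thesis .
qed

lemma dual_step_residual:
  fixes A :: "real^'p^'p"
  assumes "d * cu = 1"
    and "u1 = u0 - cu *\<^sub>R (2 *\<^sub>R (A *v b1 - z1 - c) - (A *v b0 - z0 - c))"
    and "A *v \<beta>s - zs - c = 0"
  shows "A *v (b0 - b1) - (z0 - z1) + d *\<^sub>R (u0 - u1) = A *v (b1 - \<beta>s) - (z1 - zs)"
proof -
  have "d *\<^sub>R (u0 - u1) = 2 *\<^sub>R (A *v b1 - z1 - c) - (A *v b0 - z0 - c)"
    using assms(1,2) by simp
  moreover have "A *v (b1 - \<beta>s) - (z1 - zs) = A *v b1 - z1 - c"
    using assms(3) by (simp add: matrix_vector_mult_diff_distrib algebra_simps)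
  moreover have "A *v (b0 - b1) - (z0 - z1) = (A *v b0 - z0 - c) - (A *v b1 - z1 - c)"
    by (simp add: matrix_vector_mult_diff_distrib)
  ultimately show ?thesis
    by (simp only:) (simp add: scaleR_2 algebra_simps)
qed

lemma ppa_step_H_inner_nonneg:
  fixes X :: "real^'p::finite^'n::finite"
  assumes mu_pos: "\<mu> > 0" and lam_nonneg: "0 \<le> lam"
    and eta_pos: "\<forall>j. eta j > 0" and d_cu: "d * cu = 1"
    and \<beta>_step: "\<forall>j. let v = b0$j + (transpose (gram X) *v u0)$j / eta j in
          b1$j = sgn v * max (\<bar>v\<bar> - 1 / eta j) 0"
    and z_step: "\<forall>j. z1$j = min (max (z0$j - u0$j / \<mu>) (- (real CARD('n) * lam)))
                             (real CARD('n) * lam)"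
    and u_step: "u1 = u0 - cu *\<^sub>R
        (2 *\<^sub>R (gram X *v b1 - z1 - transpose X *v y) - (gram X *v b0 - z0 - transpose X *v y))"
    and saddle: "(\<beta>s, zs, us) \<in> saddle_set X y lam"
  shows "0 \<le> H_inner X eta \<mu> d ((b1, z1, u1) - (\<beta>s, zs, us)) ((b0, z0, u0) - (b1, z1, u1))"
proof -
  let ?A = "gram X"
  define ab az au where "ab = b1 - \<beta>s" and "az = z1 - zs" and "au = u1 - us"
  define eb ez eu where "eb = b0 - b1" and "ez = z0 - z1" and "eu = u0 - u1"
  have \<beta>_part: "0 \<le> (\<Sum>j\<in>UNIV. eta j * ab$j * eb$j) + (u0 - us) \<bullet> (?A *v ab)"
  proof -
    have "0 \<le> (\<Sum>j\<in>UNIV. eta j * ab$j * eb$j)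
        + (transpose ?A *v u0 - transpose ?A *v us) \<bullet> ab"
      using l1_prox_step_monotone[OF eta_pos \<beta>_step]
        saddle_set_l1_subgradient[OF saddle lam_nonneg]
      by (simp add: ab_def eb_def)
    then show ?thesis
      by (simp only: inner_diff_left inner_transpose_mult)
  qed
  have z_part: "0 \<le> \<mu> * (az \<bullet> ez) - (u0 - us) \<bullet> az"
  proof -
    have "in_box CARD('n) lam zs"
      using saddle_set_in_box[OF saddle lam_nonneg] .
    then have "0 \<le> \<mu> * (az \<bullet> ez) - u0 \<bullet> az"
      using box_projection_step_monotone[OF mu_pos z_step] by (simp add: az_def ez_def in_box_def)
    moreover have "in_box CARD('n) lam z1"
      using z_step abs_clip_le lam_nonneg by (simp add: in_box_def)
    then have "0 \<le> us \<bullet> az"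
      using saddle_set_box_minimal[OF saddle lam_nonneg] by (simp add: az_def inner_diff_right)
    ultimately show ?thesis
      by (simp add: inner_diff_left)
  qed
  have u_part: "?A *v eb - ez + d *\<^sub>R eu = ?A *v ab - az"
    unfolding ab_def az_def eb_def ez_def eu_def
    using dual_step_residual[OF d_cu u_step saddle_set_feasible[OF saddle lam_nonneg]] .
  have "H_inner X eta \<mu> d (ab, az, au) (eb, ez, eu)
      = ((\<Sum>j\<in>UNIV. eta j * ab$j * eb$j) + (u0 - us) \<bullet> (?A *v ab))
        + (\<mu> * (az \<bullet> ez) - (u0 - us) \<bullet> az) + au \<bullet> (?A *v eb - ez + d *\<^sub>R eu - (?A *v ab - az))"
    by (simp add: H_inner_def au_def eu_def inner_add_left inner_add_right inner_diff_left
        inner_diff_right algebra_simps)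
  also have "\<dots> = ((\<Sum>j\<in>UNIV. eta j * ab$j * eb$j) + (u0 - us) \<bullet> (?A *v ab))
        + (\<mu> * (az \<bullet> ez) - (u0 - us) \<bullet> az)"
    using u_part by simp
  finally have "0 \<le> H_inner X eta \<mu> d (ab, az, au) (eb, ez, eu)"
    using \<beta>_part z_part by linarith
  then show ?thesis
    by (simp add: ab_def az_def au_def eb_def ez_def eu_def)
qed

lemma ppa_seq_fejer_monotone:
  fixes X :: "real^'p::finite^'n::finite"
  assumes "ppa_seq X y lam \<mu> eta cu \<beta> z u"
    and "\<mu> > 0" and "0 \<le> lam" and "\<forall>j. eta j > 0" and "d * cu = 1"
  shows "\<forall>gs \<in> saddle_set X y lam. \<forall>t.
          Hnorm_sq X eta \<mu> d ((\<beta> (Suc t), z (Suc t), u (Suc t)) - gs)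
          \<le> Hnorm_sq X eta \<mu> d ((\<beta> t, z t, u t) - gs)
            - Hnorm_sq X eta \<mu> d ((\<beta> (Suc t), z (Suc t), u (Suc t)) - (\<beta> t, z t, u t))"
proof (intro ballI allI Hnorm_sq_three_point)
  fix gs t
  assume "gs \<in> saddle_set X y lam"
  moreover obtain \<beta>s zs us where gs: "gs = (\<beta>s, zs, us)"
    by (cases gs) auto
  ultimately show "0 \<le> H_inner X eta \<mu> d ((\<beta> (Suc t), z (Suc t), u (Suc t)) - gs)
      ((\<beta> t, z t, u t) - (\<beta> (Suc t), z (Suc t), u (Suc t)))"
    using assms(1)[unfolded ppa_seq_def, rule_format, of t] unfolding gs
    by (intro ppa_step_H_inner_nonneg[OF assms(2-5)]) auto
qed

lemma quadratic_nonpos_imp_linear_coeff_zero: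
  fixes a b :: real
  assumes "\<forall>t. 2 * t * a + t\<^sup>2 * b \<le> 0"
  shows "a = 0"
proof -
  define t where "t = a / (\<bar>b\<bar> + 1)"
  have a: "a = (\<bar>b\<bar> + 1) * t"
    by (simp add: t_def add_pos_nonneg)
  have "t\<^sup>2 * (2 * (\<bar>b\<bar> + 1) + b) \<le> 0"
    using assms[rule_format, of t] unfolding a by (simp add: power2_eq_square algebra_simps)
  moreover have "2 * (\<bar>b\<bar> + 1) + b > 0"
    by (simp add: abs_if)
  ultimately have "t = 0"
    by (simp add: mult_le_0_iff)
  then show ?thesis
    using a by simp
qed

lemma rayleigh_max_stationary:
  fixes M :: "real^'n^'n"
  assumes sym: "transpose M = M" and S: "subspace S" and "v \<in> S" and "w \<in> S"
    and max: "\<forall>x\<in>S. x \<bullet> (M *v x) \<le> c * (x \<bullet> x)"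
    and attained: "v \<bullet> (M *v v) = c * (v \<bullet> v)"
  shows "w \<bullet> (M *v v) = c * (w \<bullet> v)"
proof -
  have "v \<bullet> (M *v w) = w \<bullet> (M *v v)"
    by (metis inner_transpose_mult sym inner_commute)
  have "2 * t * (w \<bullet> (M *v v) - c * (w \<bullet> v)) + t\<^sup>2 * (w \<bullet> (M *v w) - c * (w \<bullet> w)) \<le> 0" for t
  proof -
    have "v + t *\<^sub>R w \<in> S"
      using S \<open>v \<in> S\<close> \<open>w \<in> S\<close> by (simp add: subspace_add subspace_scale)
    then have "(v + t *\<^sub>R w) \<bullet> (M *v (v + t *\<^sub>R w)) \<le> c * ((v + t *\<^sub>R w) \<bullet> (v + t *\<^sub>R w))"
      using max by blast
    then show ?thesis
      using \<open>v \<bullet> (M *v w) = w \<bullet> (M *v v)\<close> attained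
      by (simp add: matrix_vector_right_distrib matrix_vector_mult_scaleR inner_add_left inner_add_right
          inner_commute power2_eq_square algebra_simps)
  qed
  then show ?thesis
    using quadratic_nonpos_imp_linear_coeff_zero by fastforce
qed

lemma rayleigh_max_exists:
  fixes M :: "real^'n^'n"
  assumes S: "subspace S" and "x0 \<in> S" and "x0 \<noteq> 0"
  shows "\<exists>v\<in>S. norm v = 1 \<and> (\<forall>x\<in>S. x \<bullet> (M *v x) \<le> (v \<bullet> (M *v v)) * (x \<bullet> x))"
proof -
  define q where "q x = x \<bullet> (M *v x)" for x
  define T where "T = sphere 0 1 \<inter> S"
  have "compact T"
    unfolding T_def using S by (simp add: closed_subspace compact_Int_closed)
  moreover have "(1 / norm x0) *\<^sub>R x0 \<in> T"
    using assms by (simp add: T_def subspace_scale)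
  moreover have "continuous_on T q"
    unfolding q_def by (intro continuous_intros linear_continuous_on matrix_vector_mul_bounded_linear)
  ultimately obtain v where "v \<in> T" and v_max: "\<forall>x\<in>T. q x \<le> q v"
    using continuous_attains_sup by (metis empty_iff)
  have "q x \<le> q v * (x \<bullet> x)" if "x \<in> S" for x
  proof (cases "x = 0")
    case False
    then have "(1 / norm x) *\<^sub>R x \<in> T"
      using S \<open>x \<in> S\<close> by (simp add: T_def subspace_scale)
    moreover have "q ((1 / norm x) *\<^sub>R x) = q x / (x \<bullet> x)"
      by (simp add: q_def matrix_vector_mult_scaleR power2_eq_square dot_square_norm power_divide)
    ultimately have "q x / (x \<bullet> x) \<le> q v"
      using v_max by metis
    moreover have "x \<bullet> x > 0"
      using False by simp
    ultimately show ?thesis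
      by (simp add: pos_divide_le_eq)
  qed (simp add: q_def)
  then show ?thesis
    using \<open>v \<in> T\<close> by (auto simp: T_def q_def)
qed

lemma matrix_vector_mult_component_supported:
  assumes "\<forall>k. k \<notin> I \<longrightarrow> x$k = 0"
  shows "(M *v x)$j = (\<Sum>k\<in>I. M$j$k * x$k)"
proof -
  have "(M *v x)$j = (\<Sum>k\<in>UNIV. if k \<in> I then M$j$k * x$k else 0)"
    using assms by (auto simp: matrix_vector_mult_def intro: sum.cong)
  then show ?thesis
    by (simp add: sum.inter_restrict[symmetric])
qed

lemma eigenvalue_on_exists_nonneg:
  fixes M :: "real^'p::finite^'p"
  assumes sym: "transpose M = M" and psd: "\<forall>x. 0 \<le> x \<bullet> (M *v x)" and "I \<noteq> {}"
  shows "\<exists>c\<ge>0. eigenvalue_on I M c"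
proof -
  define S where "S = {x :: real^'p. \<forall>k. k \<notin> I \<longrightarrow> x$k = 0}"
  have S: "subspace S"
    by (auto simp: subspace_def S_def)
  have axis_S: "axis j 1 \<in> S" if "j \<in> I" for j
    using that by (auto simp: S_def axis_def)
  obtain j0 where "j0 \<in> I"
    using \<open>I \<noteq> {}\<close> by blast
  then obtain v where "v \<in> S" and "norm v = 1"
    and max: "\<forall>x\<in>S. x \<bullet> (M *v x) \<le> (v \<bullet> (M *v v)) * (x \<bullet> x)"
    using rayleigh_max_exists[OF S axis_S] by (metis axis_eq_0_iff zero_neq_one)
  define c where "c = v \<bullet> (M *v v)"
  have "v \<bullet> v = 1"
    using \<open>norm v = 1\<close> by (simp add: norm_eq_sqrt_inner)
  have "(\<Sum>k\<in>I. M$j$k * v$k) = c * v$j" if "j \<in> I" for j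
  proof -
    have "axis j 1 \<bullet> (M *v v) = c * (axis j 1 \<bullet> v)"
      using rayleigh_max_stationary[OF sym S \<open>v \<in> S\<close> axis_S[OF that]] max \<open>v \<bullet> v = 1\<close>
      by (simp add: c_def)
    then show ?thesis
      using \<open>v \<in> S\<close> by (simp add: inner_axis' S_def matrix_vector_mult_component_supported)
  qed
  moreover have "v \<noteq> 0"
    using \<open>norm v = 1\<close> by auto
  ultimately have "eigenvalue_on I M c"
    using \<open>v \<in> S\<close> unfolding eigenvalue_on_def S_def by blast
  moreover have "c \<ge> 0"
    using psd by (simp add: c_def)
  ultimately show ?thesis
    by blast
qed

lemma scaled_gram_symmetric: "transpose (c *\<^sub>R (transpose B ** B)) = c *\<^sub>R (transpose B ** B)"
  for B :: "real^'m^'n"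
  unfolding transpose_scalar matrix_transpose_mul transpose_transpose ..

lemma scaled_gram_psd:
  fixes B :: "real^'m^'n"
  assumes "0 \<le> c"
  shows "0 \<le> x \<bullet> ((c *\<^sub>R (transpose B ** B)) *v x)"
proof -
  have "x \<bullet> ((c *\<^sub>R (transpose B ** B)) *v x) = c * ((B *v x) \<bullet> (B *v x))"
    by (simp add: scaleR_matrix_vector_assoc[symmetric] matrix_vector_mul_assoc[symmetric]
        inner_transpose_mult[symmetric] inner_commute)
  then show ?thesis
    using assms by simp
qed

theorem proposition2:
  fixes X :: "real^'p::finite^'n::finite" and y :: "real^'n" and lam \<mu> :: real
    and K :: nat and blk :: "'p \<Rightarrow> nat"
  assumes lam_pos: "lam > 0" and mu_pos: "\<mu> > 0"
    and blk_range: "\<forall>j. blk j < K"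
    and blk_nonempty: "\<forall>i<K. \<exists>j. blk j = i"
  shows
   "(\<forall>(\<eta>::real) \<beta> z u.
       (\<forall>c. eigenvalue_on UNIV (\<mu> *\<^sub>R (transpose (gram X) ** gram X)) c \<longrightarrow> c < \<eta>) \<longrightarrow>
       ppa_seq X y lam \<mu> (\<lambda>j. \<eta>) (\<mu> / 2) \<beta> z u \<longrightarrow>
       (\<forall>gs \<in> saddle_set X y lam. \<forall>t.
          Hnorm_sq X (\<lambda>j. \<eta>) \<mu> (2 / \<mu>) ((\<beta> (Suc t), z (Suc t), u (Suc t)) - gs)
          \<le> Hnorm_sq X (\<lambda>j. \<eta>) \<mu> (2 / \<mu>) ((\<beta> t, z t, u t) - gs)
            - Hnorm_sq X (\<lambda>j. \<eta>) \<mu> (2 / \<mu>)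
                ((\<beta> (Suc t), z (Suc t), u (Suc t)) - (\<beta> t, z t, u t))))
    \<and>
    (\<forall>(\<eta>::nat \<Rightarrow> real) \<beta> z u.
       (\<forall>i<K. \<forall>c. eigenvalue_on {j. blk j = i} (\<mu> *\<^sub>R (transpose (gram X) ** gram X)) c
                    \<longrightarrow> c < \<eta> i) \<longrightarrow>
       ppa_seq X y lam \<mu> (\<lambda>j. \<eta> (blk j)) (\<mu> / (real K + 1)) \<beta> z u \<longrightarrow>
       (\<forall>gs \<in> saddle_set X y lam. \<forall>t.
          Hnorm_sq X (\<lambda>j. \<eta> (blk j)) \<mu> ((real K + 1) / \<mu>) ((\<beta> (Suc t), z (Suc t), u (Suc t)) - gs)
          \<le> Hnorm_sq X (\<lambda>j. \<eta> (blk j)) \<mu> ((real K + 1) / \<mu>) ((\<beta> t, z t, u t) - gs)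
            - Hnorm_sq X (\<lambda>j. \<eta> (blk j)) \<mu> ((real K + 1) / \<mu>)
                ((\<beta> (Suc t), z (Suc t), u (Suc t)) - (\<beta> t, z t, u t))))"
proof -
  let ?M = "\<mu> *\<^sub>R (transpose (gram X) ** gram X)"
  have "\<forall>x. 0 \<le> x \<bullet> (?M *v x)"
    using scaled_gram_psd mu_pos less_imp_le by blast
  then have eta_pos: "\<eta> > 0" if "I \<noteq> {}" and "\<forall>c. eigenvalue_on I ?M c \<longrightarrow> c < \<eta>" for I \<eta>
    using eigenvalue_on_exists_nonneg[OF scaled_gram_symmetric _ \<open>I \<noteq> {}\<close>] that(2) by force
  have block_eta_pos: "\<forall>j. \<eta> (blk j) > 0"
    if "\<forall>i<K. \<forall>c. eigenvalue_on {j. blk j = i} ?M c \<longrightarrow> c < \<eta> i" for \<eta>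
  proof
    fix j
    have "{j'. blk j' = blk j} \<noteq> {}"
      by blast
    moreover have "\<forall>c. eigenvalue_on {j'. blk j' = blk j} ?M c \<longrightarrow> c < \<eta> (blk j)"
      using that[rule_format, OF blk_range[rule_format, of j]] by blast
    ultimately show "\<eta> (blk j) > 0"
      by (rule eta_pos)
  qed
  have step_coeffs: "2 / \<mu> * (\<mu> / 2) = 1" "(real K + 1) / \<mu> * (\<mu> / (real K + 1)) = 1"
    using mu_pos by simp_all
  show ?thesis
    by (intro conjI allI impI; erule ppa_seq_fejer_monotone[OF _ mu_pos less_imp_le[OF lam_pos]];
        (rule step_coeffs | erule block_eta_pos | blast intro: eta_pos[OF UNIV_not_empty]))
qed

end
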